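(* Let $X$ be an infinite-dimensional real Banach space and let $A \subset X$ be a convex subset with $0 \in A$. Assume there is a finite subset $O \subset X$ such that $B_X \subset A + O$. Then for every $\varepsilon > 0$ there exist a finite-codimensional subspace $Y \subset X$ and a finite subset $H \subset A$ such that $$B_Y \subset (A - H) + \varepsilon B_X.$$
   Context: $B_X$ is the closed unit ball of $X$ and $B_Y = B_X \cap Y$. Sums and differences of sets are Minkowski sums: $A + O = \{a+o : a\in A, o \in O\}$, $A - H = \{a - h : a \in A, h \in H\}$. *)

theory Defs
  imports "HOL-Analysis.Analysis"
begin

definition finite_codim :: "'a::real_vector set \<Rightarrow> bool" where
  "finite_codim Y \<longleftrightarrow> (\<exists>F. finite F \<and> span (Y \<union> F) = UNIV)"

definition infinite_dimensional :: "'a::real_vector itself \<Rightarrow> bool" where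
  "infinite_dimensional _ \<longleftrightarrow> \<not> (\<exists>S::'a set. finite S \<and> span S = UNIV)"

end

(* Split the finite set O into the points q whose translate q + A comes within \<epsilon> of the origin
   and the remaining far points. For a near q choose h \<in> A with norm (h + q) \<le> \<epsilon>. For a far q,
   Hahn-Banach separates the convex set q + A from the \<epsilon>-ball by a continuous functional G_q
   positive on q + A. On the common kernel Y of these finitely many functionals, a point a + q of
   B_Y cannot have q far, since G_q vanishes on Y; so it equals a - h + (h + q) with h + q \<in> \<epsilon>B_X. *)
theory Submission
  imports Defs
begin

(* Dominated linear functionals on subspaces, represented by their graphs in X \<times> \<real>, so that
   Zorn's lemma can be applied to set inclusion. *)
definition dominated_graph :: "('a::real_vector \<Rightarrow> real) \<Rightarrow> ('a \<times> real) set \<Rightarrow> bool" where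
  "dominated_graph p G \<longleftrightarrow> subspace G \<and> single_valued G \<and> (\<forall>(x, a) \<in> G. a \<le> p x)"

lemma
  assumes "dominated_graph p G"
  shows dominated_graph_zero: "(0, 0) \<in> G"
    and dominated_graph_add: "(x, a) \<in> G \<Longrightarrow> (y, b) \<in> G \<Longrightarrow> (x + y, a + b) \<in> G"
    and dominated_graph_scale: "(x, a) \<in> G \<Longrightarrow> (r *\<^sub>R x, r * a) \<in> G"
    and dominated_graph_unique: "(x, a) \<in> G \<Longrightarrow> (x, b) \<in> G \<Longrightarrow> a = b"
    and dominated_graph_le: "(x, a) \<in> G \<Longrightarrow> a \<le> p x"
  using assms subspace_0[of G] subspace_add[of G "(x, a)" "(y, b)"] subspace_scale[of G "(x, a)" r]
  unfolding dominated_graph_def single_valued_def by (auto simp: zero_prod_def)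

lemma chain_Union_pair:
  assumes "subset.chain \<A> \<C>" "x \<in> \<Union>\<C>" "y \<in> \<Union>\<C>"
  obtains G where "G \<in> \<C>" "x \<in> G" "y \<in> G"
  using assms unfolding subset.chain_def by blast

lemma dominated_graph_chain_Union:
  assumes "\<C> \<noteq> {}" and chain: "subset.chain {G. dominated_graph p G} \<C>"
  shows "dominated_graph p (\<Union>\<C>)"
proof -
  have dom: "dominated_graph p G" if "G \<in> \<C>" for G
    using chain that unfolding subset.chain_def by blast
  have "subspace (\<Union>\<C>)"
    unfolding subspace_def
  proof (intro conjI ballI allI)
    obtain G where "G \<in> \<C>" using assms(1) by blast
    then show "0 \<in> \<Union>\<C>"
      using dom subspace_0 unfolding dominated_graph_def by blast
  next
    fix u v assume "u \<in> \<Union>\<C>" "v \<in> \<Union>\<C>"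
    then obtain G where "G \<in> \<C>" "u \<in> G" "v \<in> G" using chain_Union_pair[OF chain] by blast
    then show "u + v \<in> \<Union>\<C>" using dom subspace_add unfolding dominated_graph_def by blast
  next
    fix r u assume "u \<in> \<Union>\<C>"
    then obtain G where "G \<in> \<C>" "u \<in> G" by blast
    then show "r *\<^sub>R u \<in> \<Union>\<C>" using dom subspace_scale unfolding dominated_graph_def by blast
  qed
  moreover have "single_valued (\<Union>\<C>)"
  proof (rule single_valuedI)
    fix x a b assume "(x, a) \<in> \<Union>\<C>" "(x, b) \<in> \<Union>\<C>"
    then obtain G where "G \<in> \<C>" "(x, a) \<in> G" "(x, b) \<in> G" using chain_Union_pair[OF chain] by blast
    then show "a = b" using dom unfolding dominated_graph_def single_valued_def by blast
  qed
  moreover have "\<forall>(x, a) \<in> \<Union>\<C>. a \<le> p x"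
    using dom unfolding dominated_graph_def by blast
  ultimately show ?thesis unfolding dominated_graph_def by blast
qed

lemma graph_add_line_iff:
  "(x, b) \<in> {u + v | u v. u \<in> M \<and> v \<in> span {(x1, c)}}
    \<longleftrightarrow> (\<exists>y a t. (y, a) \<in> M \<and> x = y + t *\<^sub>R x1 \<and> b = a + t * c)"
  unfolding span_singleton by force

lemma single_valued_graph_add_line:
  fixes M :: "('a::real_vector \<times> real) set"
  assumes M: "subspace M" "single_valued M" and x1: "x1 \<notin> Domain M"
  shows "single_valued {u + v | u v. u \<in> M \<and> v \<in> span {(x1, c)}}"
proof (rule single_valuedI)
  fix x b b' assume "(x, b) \<in> {u + v | u v. u \<in> M \<and> v \<in> span {(x1, c)}}"
    "(x, b') \<in> {u + v | u v. u \<in> M \<and> v \<in> span {(x1, c)}}"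
  then obtain y a t y' a' t' where ya: "(y, a) \<in> M" "x = y + t *\<^sub>R x1" "b = a + t * c"
    and ya': "(y', a') \<in> M" "x = y' + t' *\<^sub>R x1" "b' = a' + t' * c"
    unfolding graph_add_line_iff by blast
  have "t = t'"
  proof (rule ccontr)
    assume "t \<noteq> t'"
    have "(y' - y, a' - a) \<in> M" using subspace_diff[OF M(1) ya'(1) ya(1)] by simp
    moreover have "y' - y = (t - t') *\<^sub>R x1" using ya(2) ya'(2) by (simp add: algebra_simps)
    ultimately have "(x1, (a' - a) / (t - t')) \<in> M"
      using subspace_scale[OF M(1), of "(y' - y, a' - a)" "1 / (t - t')"] \<open>t \<noteq> t'\<close> by simp
    with x1 show False by blast
  qed
  then show "b = b'"
    using ya ya' M(2) unfolding single_valued_def by auto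
qed

context
  fixes p :: "'a::real_vector \<Rightarrow> real"
  assumes subadditive: "\<And>x y. p (x + y) \<le> p x + p y"
    and pos_homogeneous: "\<And>s x. s > 0 \<Longrightarrow> p (s *\<^sub>R x) \<le> s * p x"
begin

lemma pos_homogeneous_eq:
  assumes "s > 0"
  shows "p (s *\<^sub>R x) = s * p x"
proof -
  have "p x \<le> (1 / s) * p (s *\<^sub>R x)"
    using pos_homogeneous[of "1 / s" "s *\<^sub>R x"] assms by simp
  then have "s * p x \<le> p (s *\<^sub>R x)" using assms by (simp add: field_simps)
  with pos_homogeneous[OF assms, of x] show ?thesis by linarith
qed

lemma dominated_graph_extension_bounds:
  assumes M: "dominated_graph p M"
  obtains c where "\<And>y a. (y, a) \<in> M \<Longrightarrow> a - p (y - x1) \<le> c"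
    and "\<And>y a. (y, a) \<in> M \<Longrightarrow> c \<le> p (y + x1) - a"
proof -
  define D where "D = {a - p (y - x1) | y a. (y, a) \<in> M}"
  have "(0, 0) \<in> M" using dominated_graph_zero[OF M] .
  then have "D \<noteq> {}" unfolding D_def by blast
  have upper: "d \<le> p (y' + x1) - a'" if "d \<in> D" "(y', a') \<in> M" for d y' a'
  proof -
    obtain y a where ya: "(y, a) \<in> M" "d = a - p (y - x1)"
      using \<open>d \<in> D\<close> unfolding D_def by blast
    have "a + a' \<le> p (y + y')"
      using dominated_graph_le[OF M dominated_graph_add[OF M ya(1) that(2)]] .
    also have "\<dots> \<le> p (y - x1) + p (y' + x1)" using subadditive[of "y - x1" "y' + x1"] by simp
    finally show ?thesis using ya(2) by simp
  qed
  then have "bdd_above D" using \<open>(0, 0) \<in> M\<close> unfolding bdd_above_def by blast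
  show thesis
  proof (rule that[of "Sup D"])
    show "a - p (y - x1) \<le> Sup D" if "(y, a) \<in> M" for y a
      using cSup_upper[OF _ \<open>bdd_above D\<close>] that unfolding D_def by blast
    show "Sup D \<le> p (y + x1) - a" if "(y, a) \<in> M" for y a
      using cSup_least[OF \<open>D \<noteq> {}\<close>] upper that by blast
  qed
qed

lemma dominated_graph_extension_le:
  assumes M: "dominated_graph p M" and ya: "(y, a) \<in> M"
    and lower: "\<And>y a. (y, a) \<in> M \<Longrightarrow> a - p (y - x1) \<le> c"
    and upper: "\<And>y a. (y, a) \<in> M \<Longrightarrow> c \<le> p (y + x1) - a"
  shows "a + t * c \<le> p (y + t *\<^sub>R x1)"
proof -
  consider "t > 0" | "t = 0" | "t < 0" by linarith
  then show ?thesis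
  proof cases
    case 1
    have "c \<le> p ((1 / t) *\<^sub>R y + x1) - (1 / t) * a"
      using upper[OF dominated_graph_scale[OF M ya]] .
    then have "a + t * c \<le> t * p ((1 / t) *\<^sub>R y + x1)" using 1 by (simp add: field_simps)
    also have "\<dots> = p (t *\<^sub>R ((1 / t) *\<^sub>R y + x1))" using pos_homogeneous_eq[OF 1] by simp
    also have "t *\<^sub>R ((1 / t) *\<^sub>R y + x1) = y + t *\<^sub>R x1" using 1 by (simp add: scaleR_add_right)
    finally show ?thesis .
  next
    case 2
    then show ?thesis using dominated_graph_le[OF M ya] by simp
  next
    case 3
    then have s: "- t > 0" by simp
    have "(1 / - t) * a - p ((1 / - t) *\<^sub>R y - x1) \<le> c"
      using lower[OF dominated_graph_scale[OF M ya]] .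
    then have "a + t * c \<le> - t * p ((1 / - t) *\<^sub>R y - x1)" using s by (simp add: field_simps)
    also have "\<dots> = p (- t *\<^sub>R ((1 / - t) *\<^sub>R y - x1))" using pos_homogeneous_eq[OF s] by simp
    also have "- t *\<^sub>R ((1 / - t) *\<^sub>R y - x1) = y + t *\<^sub>R x1" using s by (simp add: scaleR_diff_right)
    finally show ?thesis .
  qed
qed

lemma dominated_graph_extend:
  assumes M: "dominated_graph p M" and x1: "x1 \<notin> Domain M"
  obtains M' where "dominated_graph p M'" "M \<subset> M'"
proof -
  obtain c where lower: "\<And>y a. (y, a) \<in> M \<Longrightarrow> a - p (y - x1) \<le> c"
    and upper: "\<And>y a. (y, a) \<in> M \<Longrightarrow> c \<le> p (y + x1) - a"
    using dominated_graph_extension_bounds[OF M] by blast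
  define M' where "M' = {u + v | u v. u \<in> M \<and> v \<in> span {(x1, c)}}"
  have "subspace M" "single_valued M" using M unfolding dominated_graph_def by blast+
  then have "subspace M'" "single_valued M'"
    unfolding M'_def using subspace_sums subspace_span single_valued_graph_add_line x1 by blast+
  moreover have "\<forall>(x, b) \<in> M'. b \<le> p x"
  proof clarify
    fix x b assume "(x, b) \<in> M'"
    then obtain y a t where "(y, a) \<in> M" "x = y + t *\<^sub>R x1" "b = a + t * c"
      unfolding M'_def graph_add_line_iff by blast
    then show "b \<le> p x" using dominated_graph_extension_le[OF M _ lower upper] by blast
  qed
  moreover have "u \<in> M'" if "u \<in> M" for u
    unfolding M'_def using that span_zero[of "{(x1, c)}"] by (intro CollectI exI[of _ u] exI[of _ 0]) simp
  moreover have "(x1, c) \<in> M' - M"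
    using graph_add_line_iff[of x1 c M x1 c] dominated_graph_zero[OF M] x1 unfolding M'_def by force
  ultimately show thesis using that[of M'] unfolding dominated_graph_def by blast
qed

theorem Hahn_Banach_sublinear:
  obtains F where "linear F" "\<And>x. F x \<le> p x"
proof -
  have "p 0 \<le> 2 * p 0" using pos_homogeneous[of 2 0] by simp
  then have "dominated_graph p {0}"
    using subspace_single_0[where 'a = "'a \<times> real"]
    unfolding dominated_graph_def by (auto simp: single_valued_def zero_prod_def)
  then have "\<exists>M \<in> {G. dominated_graph p G}. \<forall>X \<in> {G. dominated_graph p G}. M \<subseteq> X \<longrightarrow> X = M"
    by (intro subset_Zorn_nonempty) (auto intro: dominated_graph_chain_Union)
  then obtain M where M: "dominated_graph p M"
    and maximal: "\<And>X. dominated_graph p X \<Longrightarrow> M \<subseteq> X \<Longrightarrow> X = M"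
    by blast
  have total: "\<exists>a. (x, a) \<in> M" for x
    using dominated_graph_extend[OF M, of x] maximal by blast
  define F where "F x = (THE a. (x, a) \<in> M)" for x
  have F_graph: "(x, a) \<in> M \<longleftrightarrow> a = F x" for x a
    unfolding F_def using total[of x] dominated_graph_unique[OF M] by (metis theI)
  show thesis
  proof
    show "linear F"
      by (rule linearI) (use F_graph dominated_graph_add[OF M] dominated_graph_scale[OF M] in auto)
    show "F x \<le> p x" for x
      using F_graph dominated_graph_le[OF M] by blast
  qed
qed

end

lemma convex_scaled_add:
  assumes "convex C" "c1 \<in> C" "c2 \<in> C" "t1 \<ge> 0" "t2 \<ge> 0"
  obtains c where "c \<in> C" "t1 *\<^sub>R c1 + t2 *\<^sub>R c2 = (t1 + t2) *\<^sub>R c"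
proof (cases "t1 + t2 = 0")
  case True
  then have "t1 = 0" "t2 = 0" using assms by auto
  then show thesis using that[of c1] assms by simp
next
  case False
  then have pos: "t1 + t2 > 0" using assms by simp
  define c where "c = (t1 / (t1 + t2)) *\<^sub>R c1 + (t2 / (t1 + t2)) *\<^sub>R c2"
  show thesis
  proof (rule that)
    show "c \<in> C" unfolding c_def
      using convexD[OF assms(1-3), of "t1 / (t1 + t2)" "t2 / (t1 + t2)"] assms pos
      by (simp add: add_divide_distrib[symmetric])
    show "t1 *\<^sub>R c1 + t2 *\<^sub>R c2 = (t1 + t2) *\<^sub>R c"
      unfolding c_def using pos by (simp add: scaleR_add_right)
  qed
qed

(* A linear form below this sublinear functional is bounded by the norm and is \<le> -\<epsilon> on -C:
   this is how Hahn-Banach separates C from the \<epsilon>-ball. *)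
definition cone_gauge :: "'a::real_normed_vector set \<Rightarrow> real \<Rightarrow> 'a \<Rightarrow> real" where
  "cone_gauge C \<epsilon> x = Inf {norm (x + t *\<^sub>R c) - t * \<epsilon> | t c. t \<ge> 0 \<and> c \<in> C}"

context
  fixes C :: "'a::real_normed_vector set" and \<epsilon> :: real
  assumes convex: "convex C" and nonempty: "C \<noteq> {}" and far: "\<forall>c\<in>C. \<epsilon> \<le> norm c"
begin

lemma cone_gauge_le:
  assumes "t \<ge> 0" "c \<in> C"
  shows "cone_gauge C \<epsilon> x \<le> norm (x + t *\<^sub>R c) - t * \<epsilon>"
proof -
  have "- norm x \<le> norm (x + t *\<^sub>R c) - t * \<epsilon>" if "t \<ge> 0" "c \<in> C" for t c
  proof -
    have "t * \<epsilon> \<le> norm (t *\<^sub>R c)" using far \<open>c \<in> C\<close> \<open>t \<ge> 0\<close> by (simp add: mult_left_mono)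
    also have "\<dots> \<le> norm (x + t *\<^sub>R c) + norm x" using norm_triangle_ineq4[of "x + t *\<^sub>R c" x] by simp
    finally show ?thesis by simp
  qed
  then have "bdd_below {norm (x + t *\<^sub>R c) - t * \<epsilon> | t c. t \<ge> 0 \<and> c \<in> C}"
    unfolding bdd_below_def by blast
  moreover have "norm (x + t *\<^sub>R c) - t * \<epsilon> \<in> {norm (x + t *\<^sub>R c) - t * \<epsilon> | t c. t \<ge> 0 \<and> c \<in> C}"
    using assms by blast
  ultimately show ?thesis unfolding cone_gauge_def by (simp add: cInf_lower)
qed

lemma cone_gauge_greatest:
  assumes "\<And>t c. t \<ge> 0 \<Longrightarrow> c \<in> C \<Longrightarrow> w \<le> norm (x + t *\<^sub>R c) - t * \<epsilon>"
  shows "w \<le> cone_gauge C \<epsilon> x"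
proof -
  obtain c0 where "c0 \<in> C" using nonempty by blast
  then have "norm (x + 0 *\<^sub>R c0) - 0 * \<epsilon> \<in> {norm (x + t *\<^sub>R c) - t * \<epsilon> | t c. t \<ge> 0 \<and> c \<in> C}"
    by blast
  then show ?thesis unfolding cone_gauge_def by (intro cInf_greatest) (use assms in auto)
qed

lemma cone_gauge_le_norm: "cone_gauge C \<epsilon> x \<le> norm x"
  using cone_gauge_le[of 0] nonempty by fastforce

lemma cone_gauge_neg_le: "c \<in> C \<Longrightarrow> cone_gauge C \<epsilon> (- c) \<le> - \<epsilon>"
  using cone_gauge_le[of 1 c "- c"] by simp

lemma cone_gauge_subadditive: "cone_gauge C \<epsilon> (x + y) \<le> cone_gauge C \<epsilon> x + cone_gauge C \<epsilon> y"
proof -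
  have sum_le: "cone_gauge C \<epsilon> (x + y) \<le> (norm (x + t1 *\<^sub>R c1) - t1 * \<epsilon>) + (norm (y + t2 *\<^sub>R c2) - t2 * \<epsilon>)"
    if "t1 \<ge> 0" "c1 \<in> C" "t2 \<ge> 0" "c2 \<in> C" for t1 c1 t2 c2
  proof -
    obtain c where c: "c \<in> C" "t1 *\<^sub>R c1 + t2 *\<^sub>R c2 = (t1 + t2) *\<^sub>R c"
      using convex_scaled_add[OF convex \<open>c1 \<in> C\<close> \<open>c2 \<in> C\<close> \<open>t1 \<ge> 0\<close> \<open>t2 \<ge> 0\<close>] .
    have "cone_gauge C \<epsilon> (x + y) \<le> norm (x + y + (t1 + t2) *\<^sub>R c) - (t1 + t2) * \<epsilon>"
      using cone_gauge_le[OF _ c(1)] that by simp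
    also have "x + y + (t1 + t2) *\<^sub>R c = (x + t1 *\<^sub>R c1) + (y + t2 *\<^sub>R c2)"
      using c(2) by (simp add: algebra_simps)
    also have "norm \<dots> \<le> norm (x + t1 *\<^sub>R c1) + norm (y + t2 *\<^sub>R c2)"
      by (rule norm_triangle_ineq)
    finally show ?thesis by (simp add: algebra_simps)
  qed
  have "cone_gauge C \<epsilon> (x + y) - (norm (y + t2 *\<^sub>R c2) - t2 * \<epsilon>) \<le> cone_gauge C \<epsilon> x"
    if "t2 \<ge> 0" "c2 \<in> C" for t2 c2
    by (rule cone_gauge_greatest) (use sum_le that in force)
  then have "cone_gauge C \<epsilon> (x + y) - cone_gauge C \<epsilon> x \<le> cone_gauge C \<epsilon> y"
    by (intro cone_gauge_greatest) force
  then show ?thesis by simp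
qed

lemma cone_gauge_pos_homogeneous:
  assumes "s > 0"
  shows "cone_gauge C \<epsilon> (s *\<^sub>R x) \<le> s * cone_gauge C \<epsilon> x"
proof -
  have "cone_gauge C \<epsilon> (s *\<^sub>R x) / s \<le> norm (x + t *\<^sub>R c) - t * \<epsilon>" if "t \<ge> 0" "c \<in> C" for t c
  proof -
    have "cone_gauge C \<epsilon> (s *\<^sub>R x) \<le> norm (s *\<^sub>R x + (s * t) *\<^sub>R c) - (s * t) * \<epsilon>"
      using cone_gauge_le[of "s * t" c] that assms by simp
    also have "s *\<^sub>R x + (s * t) *\<^sub>R c = s *\<^sub>R (x + t *\<^sub>R c)" by (simp add: scaleR_add_right)
    also have "norm \<dots> - (s * t) * \<epsilon> = s * (norm (x + t *\<^sub>R c) - t * \<epsilon>)"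
      using assms by (simp add: right_diff_distrib mult.assoc)
    finally show ?thesis using assms by (simp add: field_simps)
  qed
  then have "cone_gauge C \<epsilon> (s *\<^sub>R x) / s \<le> cone_gauge C \<epsilon> x" by (rule cone_gauge_greatest)
  then show ?thesis using assms by (simp add: field_simps)
qed

lemma separation_from_ball:
  assumes "\<epsilon> > 0"
  shows "\<exists>F :: 'a \<Rightarrow> real. bounded_linear F \<and> (\<forall>c\<in>C. F c > 0)"
proof -
  obtain F where lin: "linear F" and below: "\<And>x. F x \<le> cone_gauge C \<epsilon> x"
    using Hahn_Banach_sublinear[of "cone_gauge C \<epsilon>"] cone_gauge_subadditive cone_gauge_pos_homogeneous
    by blast
  have "\<bar>F x\<bar> \<le> norm x" for x
    using below[of x] below[of "- x"] cone_gauge_le_norm[of x] cone_gauge_le_norm[of "- x"]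
      linear_neg[OF lin, of x] by simp
  then have "bounded_linear F"
    using lin by (intro bounded_linear_intro[where K = 1]) (auto simp: linear_add linear_scale)
  moreover have "F c > 0" if "c \<in> C" for c
    using below[of "- c"] cone_gauge_neg_le[OF that] linear_neg[OF lin, of c] assms by simp
  ultimately show ?thesis by blast
qed

end

lemma finite_codim_inter_kernel:
  fixes f :: "'a::real_vector \<Rightarrow> real"
  assumes Y: "finite_codim Y" "subspace Y" and f: "linear f"
  shows "finite_codim (Y \<inter> {x. f x = 0})"
proof (cases "\<exists>u\<in>Y. f u \<noteq> 0")
  case False
  then have "Y \<inter> {x. f x = 0} = Y" by auto
  then show ?thesis using Y(1) by simp
next
  case True
  then obtain u0 where "u0 \<in> Y" "f u0 \<noteq> 0" by blast
  define u where "u = (1 / f u0) *\<^sub>R u0"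
  have u: "u \<in> Y" "f u = 1"
    unfolding u_def using \<open>u0 \<in> Y\<close> \<open>f u0 \<noteq> 0\<close> Y(2) by (simp_all add: subspace_scale linear_scale[OF f])
  obtain F where F: "finite F" "span (Y \<union> F) = UNIV"
    using Y(1) unfolding finite_codim_def by blast
  let ?Z = "Y \<inter> {x. f x = 0}"
  have "y \<in> span (?Z \<union> insert u F)" if "y \<in> Y" for y
  proof -
    have "y - f y *\<^sub>R u \<in> ?Z"
      using that u Y(2) by (simp add: subspace_diff subspace_scale linear_diff[OF f] linear_scale[OF f])
    then have "(y - f y *\<^sub>R u) + f y *\<^sub>R u \<in> span (?Z \<union> insert u F)"
      by (intro span_add span_mul span_base) auto
    then show ?thesis by simp
  qed
  then have "Y \<union> F \<subseteq> span (?Z \<union> insert u F)"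
    by (auto intro: span_base)
  then have "span (?Z \<union> insert u F) = UNIV"
    using F(2) span_minimal[OF _ subspace_span] by blast
  then show ?thesis unfolding finite_codim_def using F(1) by blast
qed

lemma subspace_common_kernel:
  fixes f :: "'i \<Rightarrow> 'a::real_vector \<Rightarrow> real"
  assumes "\<And>i. i \<in> S \<Longrightarrow> linear (f i)"
  shows "subspace {x. \<forall>i\<in>S. f i x = 0}"
  unfolding subspace_def using assms by (auto simp: linear_0 linear_add linear_scale)

lemma closed_common_kernel:
  fixes f :: "'i \<Rightarrow> 'a::real_normed_vector \<Rightarrow> real"
  assumes "\<And>i. i \<in> S \<Longrightarrow> bounded_linear (f i)"
  shows "closed {x. \<forall>i\<in>S. f i x = 0}"
proof -
  have "{x. \<forall>i\<in>S. f i x = 0} = (\<Inter>i\<in>S. {x. f i x = 0})" by auto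
  moreover have "closed {x. f i x = 0}" if "i \<in> S" for i
    using assms[OF that] by (intro closed_Collect_eq continuous_on_const linear_continuous_on)
  ultimately show ?thesis by auto
qed

lemma finite_codim_common_kernel:
  fixes f :: "'i \<Rightarrow> 'a::real_vector \<Rightarrow> real"
  assumes "finite S" "\<And>i. i \<in> S \<Longrightarrow> linear (f i)"
  shows "finite_codim {x. \<forall>i\<in>S. f i x = 0}"
  using assms
proof (induction S rule: finite_induct)
  case empty
  show ?case unfolding finite_codim_def by auto
next
  case (insert j S)
  have "finite_codim ({x. \<forall>i\<in>S. f i x = 0} \<inter> {x. f j x = 0})"
    using insert by (intro finite_codim_inter_kernel subspace_common_kernel) auto
  moreover have "{x. \<forall>i\<in>insert j S. f i x = 0} = {x. \<forall>i\<in>S. f i x = 0} \<inter> {x. f j x = 0}"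
    by auto
  ultimately show ?case by simp
qed

lemma cover_by_common_kernel:
  fixes \<epsilon> :: real and G :: "'a \<Rightarrow> 'a::real_normed_vector \<Rightarrow> real"
  assumes cover: "cball 0 1 \<subseteq> {a + c | a c. a \<in> A \<and> c \<in> Oset}"
    and separated: "\<forall>q\<in>Far. \<forall>a\<in>A. G q (q + a) > 0"
    and near: "\<forall>q\<in>Oset - Far. near q \<in> A \<and> near q + q \<in> cball 0 \<epsilon>"
    and "\<epsilon> > 0"
  shows "cball 0 1 \<inter> {x. \<forall>q\<in>Far. G q x = 0}
    \<subseteq> {a - h + e | a h e. a \<in> A \<and> h \<in> near ` (Oset - Far) \<and> e \<in> (\<lambda>x. \<epsilon> *\<^sub>R x) ` cball 0 1}"
proof
  fix y assume y: "y \<in> cball 0 1 \<inter> {x. \<forall>q\<in>Far. G q x = 0}"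
  then obtain a q where a: "a \<in> A" and q: "q \<in> Oset" and "y = a + q"
    using cover by blast
  have "q \<notin> Far"
  proof
    assume "q \<in> Far"
    then have "G q (q + a) > 0" "G q y = 0" using separated a y by auto
    with \<open>y = a + q\<close> show False by (simp add: add.commute)
  qed
  then have "y = a - near q + (near q + q)" "near q + q \<in> (\<lambda>x. \<epsilon> *\<^sub>R x) ` cball 0 1"
    using \<open>y = a + q\<close> near q cball_scale[of \<epsilon> 0 1] \<open>\<epsilon> > 0\<close> by auto
  then show "y \<in> {a - h + e | a h e. a \<in> A \<and> h \<in> near ` (Oset - Far) \<and> e \<in> (\<lambda>x. \<epsilon> *\<^sub>R x) ` cball 0 1}"
    using a q \<open>q \<notin> Far\<close> by blast
qed

theorem theorem4p2:
  fixes A :: "'a::banach set" and Oset :: "'a set"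
  assumes "infinite_dimensional TYPE('a)"
    and "convex A" and "0 \<in> A"
    and "finite Oset"
    and "cball 0 1 \<subseteq> {a + c | a c. a \<in> A \<and> c \<in> Oset}"
    and "\<epsilon> > (0::real)"
  shows "\<exists>Y H. subspace Y \<and> closed Y \<and> finite_codim Y \<and> finite H \<and> H \<subseteq> A \<and>
           cball 0 1 \<inter> Y \<subseteq> {a - h + e | a h e. a \<in> A \<and> h \<in> H \<and> e \<in> (\<lambda>x. \<epsilon> *\<^sub>R x) ` cball 0 1}"
proof -
  define Far where "Far = {q \<in> Oset. \<forall>h\<in>A. \<epsilon> < norm (h + q)}"
  have "\<forall>q\<in>Far. \<exists>G :: 'a \<Rightarrow> real. bounded_linear G \<and> (\<forall>a\<in>A. G (q + a) > 0)"
  proof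
    fix q assume "q \<in> Far"
    then have "\<forall>c\<in>(+) q ` A. \<epsilon> \<le> norm c"
      unfolding Far_def by (auto simp: add.commute less_imp_le)
    then show "\<exists>G :: 'a \<Rightarrow> real. bounded_linear G \<and> (\<forall>a\<in>A. G (q + a) > 0)"
      using separation_from_ball[OF convex_translation[OF \<open>convex A\<close>], of q \<epsilon>] \<open>0 \<in> A\<close> \<open>\<epsilon> > 0\<close>
      by auto
  qed
  then obtain G :: "'a \<Rightarrow> 'a \<Rightarrow> real" where G: "\<forall>q\<in>Far. bounded_linear (G q) \<and> (\<forall>a\<in>A. G q (q + a) > 0)"
    by (rule bchoice [THEN exE]) blast
  have "\<forall>q\<in>Oset - Far. \<exists>h. h \<in> A \<and> h + q \<in> cball 0 \<epsilon>"
    unfolding Far_def by force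
  then obtain near where near: "\<forall>q\<in>Oset - Far. near q \<in> A \<and> near q + q \<in> cball 0 \<epsilon>"
    by (rule bchoice [THEN exE]) blast
  have "finite Far" using \<open>finite Oset\<close> unfolding Far_def by simp
  then show ?thesis
    using cover_by_common_kernel[OF assms(5) _ near \<open>\<epsilon> > 0\<close>, of G] \<open>finite Oset\<close> near G
    by (intro exI[of _ "{x. \<forall>q\<in>Far. G q x = 0}"] exI[of _ "near ` (Oset - Far)"])
      (auto simp: bounded_linear.linear intro!: subspace_common_kernel closed_common_kernel finite_codim_common_kernel)
qed

end
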